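(* Suppose that $Q_ph(x)=M_p(g_{p+1}h)(x)$ for Markov kernels $M_p$ and nonnegative measurable potentials $g_{p+1}$, and that (MG) holds: (i) there are constants $0<\sigma_-<\sigma_+<\infty$ and $\varphi\in\mathcal P(\mathcal X)$ with $\sigma_-\varphi(A)\le M_p(x,A)\le\sigma_+\varphi(A)$ for all $p\ge0$, $x\in\mathsf X$, $A\in\mathcal X$; (ii) $w_+:=\sup_p\|w_p\|_\infty<\infty$; (iii) $c_-:=\inf_{p,x}Q_p\mathbf 1(x)>0$. Let $\rho=1-\sigma_-/\sigma_+$ and, for $n\ge1$ and $h\in\mathrm B(\mathcal X)$, $$\sigma_n^2(h)=\sum_{\ell=0}^{n-1}(n-\ell)\frac{\eta_\ell R_\ell\{w_\ell^2\,[Q_{\ell+1}\cdots Q_{n-1}(h-\eta_nh)]^2\}}{(\eta_\ell Q_\ell\cdots Q_{n-1}\mathbf 1)^2}$$ (the asymptotic variance of the double bootstrap algorithm). Then for all $n\ge1$ and $h\in\mathrm B(\mathcal X)$, $$\sigma_n^2(h)\le w_+\frac{\mathrm{osc}(h)^2}{(1-\rho)^2(1-\rho^2)^2c_-}.$$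
   Context: $(\mathsf X,\mathcal X)$ a measurable space; $\mathrm B(\mathcal X)$ bounded real measurable functions, $\mathcal P(\mathcal X)$ probability measures, $\nu h=\int h\,d\nu$, $\|h\|_\infty=\sup|h|$, $\mathrm{osc}(h)=\sup_{x,x'}|h(x)-h(x')|$, $\mathbf 1$ the constant one. Feynman–Kac flow: $\eta_0\in\mathcal P(\mathcal X)$, $\eta_{p+1}h=\eta_pQ_ph/\eta_pQ_p\mathbf 1$ with $Q_p\mathbf 1$ bounded. $R_p$ are Markov kernels on $\mathsf X$ with $Q_p(x,\cdot)\ll R_p(x,\cdot)$ and $w_p(x,x')=\frac{dQ_p(x,\cdot)}{dR_p(x,\cdot)}(x')$ nonnegative bounded measurable; $R_p(w_p^2f)(x)=\int w_p^2(x,x')f(x')R_p(x,dx')$. Convention: $Q_{\ell+1}\cdots Q_{n-1}=\mathrm{id}$ if $\ell+1>n-1$; kernel products $(KL)(x,A)=\int K(x,dy)L(y,A)$. *)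

theory Defs
  imports "HOL-Probability.Probability"
begin

definition Qop :: "(nat \<Rightarrow> 'a \<Rightarrow> 'a measure) \<Rightarrow> (nat \<Rightarrow> 'a \<Rightarrow> real) \<Rightarrow> nat
                   \<Rightarrow> ('a \<Rightarrow> real) \<Rightarrow> 'a \<Rightarrow> real" where
  "Qop M g p f x = (\<integral>y. g (Suc p) y * f y \<partial>(M p x))"

definition Qprod :: "(nat \<Rightarrow> 'a \<Rightarrow> 'a measure) \<Rightarrow> (nat \<Rightarrow> 'a \<Rightarrow> real) \<Rightarrow> nat \<Rightarrow> nat
                   \<Rightarrow> ('a \<Rightarrow> real) \<Rightarrow> 'a \<Rightarrow> real" where
  "Qprod M g l n h = foldr (\<lambda>p f. Qop M g p f) [l..<n] h"

definition osc :: "'a measure \<Rightarrow> ('a \<Rightarrow> real) \<Rightarrow> real" where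
  "osc X h = (SUP xy \<in> space X \<times> space X. \<bar>h (fst xy) - h (snd xy)\<bar>)"

definition sigma2 :: "'a measure \<Rightarrow> (nat \<Rightarrow> 'a \<Rightarrow> 'a measure) \<Rightarrow> (nat \<Rightarrow> 'a \<Rightarrow> real)
    \<Rightarrow> (nat \<Rightarrow> 'a \<Rightarrow> 'a measure) \<Rightarrow> (nat \<Rightarrow> 'a \<Rightarrow> 'a \<Rightarrow> real) \<Rightarrow> (nat \<Rightarrow> 'a measure)
    \<Rightarrow> nat \<Rightarrow> ('a \<Rightarrow> real) \<Rightarrow> real" where
  "sigma2 X M g R w eta n h =
     (\<Sum>l<n. real (n - l) *
        (\<integral>x. (\<integral>y. (w l x y)\<^sup>2 *
              (Qprod M g (Suc l) n (\<lambda>z. h z - (\<integral>u. h u \<partial>eta n)) y)\<^sup>2 \<partial>(R l x)) \<partial>(eta l))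
        / (\<integral>x. Qprod M g l n (\<lambda>_. 1) x \<partial>(eta l))\<^sup>2)"

end

theory Submission
  imports Defs
begin

(* Write G_{p,n} = Q_p ... Q_{n-1} 1 (G n p below) and rho = 1 - sigm/sigp.  The argument has four parts.
   (1) Mixing: for v >= 0,  sigm * phi(g_{p+1} v) <= Q_p v (x) <= sigp * phi(g_{p+1} v).
       Hence G_{p,n}(x) <= (sigp/sigm) G_{p,n}(x'), and the normalised operator
       f |-> Q_{p..n-1} f / G_{p,n} contracts oscillations by rho per step (Dobrushin).
   (2) The flow satisfies eta_n f = eta_p(Q_{p..n-1} f) / eta_p G_{p,n}.  For the centred
       function h - eta_n h the ratio D/G with D = Q_{l+1..n-1}(h - eta_n h) has zero
       G-weighted eta_{l+1}-mean and oscillation at most rho^(n-l-1) osc(h), so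
       |D| <= rho^(n-l-1) osc(h) G_{l+1,n}.
   (3) Change of measure w_l dR_l = g_{l+1} dM_l gives R_l(w_l^2 v) <= w_+ Q_l v.
   (4) Together with eta_l G_{l,n} = eta_{l+1}G_{l+1,n} * eta_l Q_l 1 >= c eta_{l+1}G_{l+1,n},
       the l-th summand of sigma_n^2 is at most w_+ osc(h)^2 rho^(2(n-l-1)) (sigp/sigm) / c,
       and sum_j (j+1) rho^(2j) <= 1/(1-rho^2)^2, sigp/sigm = 1/(1-rho) <= 1/(1-rho)^2.
   Parts (1)-(2) live in the locale mixing_feynman_kac, parts (3)-(4) in fk_variance; the
   theorem instantiates the locale with w_+ = sup w and c = inf Q_p 1. *)

lemma weighted_geometric_sum_closed_form:
  "(\<Sum>j<n. real (Suc j) * q ^ j) * (1 - q)\<^sup>2 = 1 - real (Suc n) * q ^ n + real n * q ^ Suc n"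
  by (induction n) (simp_all add: algebra_simps power2_eq_square)

lemma weighted_geometric_sum_le:
  fixes q :: real assumes "0 \<le> q" "q < 1"
  shows "(\<Sum>j<n. real (Suc j) * q ^ j) \<le> 1 / (1 - q)\<^sup>2"
proof -
  have "real n * q \<le> real n" using assms by (simp add: mult_left_le)
  then have "0 \<le> q ^ n * (real (Suc n) - real n * q)" using assms by simp
  then have "(\<Sum>j<n. real (Suc j) * q ^ j) * (1 - q)\<^sup>2 \<le> 1"
    unfolding weighted_geometric_sum_closed_form by (simp add: algebra_simps)
  then show ?thesis using assms by (simp add: field_simps)
qed

text \<open>The arithmetic core of one Dobrushin contraction step.  Think of \<open>q\<close>, \<open>q1\<close>, \<open>q2\<close> as the
  \<open>phi\<close>-masses of \<open>B\<close>, \<open>B u\<close> and \<open>B (r - u)\<close> (so \<open>q1 + q2 = r q\<close>), of \<open>a/b\<close> and \<open>a'/b'\<close> as the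
  normalised averages of \<open>u \<in> [0, r]\<close> at two points: the mixing lower bound puts a common
  mass \<open>sm/sp\<close> under both averages, so they differ by at most \<open>(1 - sm/sp) r\<close>.\<close>

lemma two_point_contraction:
  fixes sm sp b b' a a' q q1 q2 r :: real
  assumes "0 < sm" "sm < sp" "0 < b" "0 < b'" "0 \<le> q1" "0 \<le> q2" "q2 = r * q - q1"
    "sm * q1 \<le> a" "sm * q2 \<le> r * b - a" "b \<le> sp * q" "sm * q1 \<le> a'" "b' \<le> sp * q"
  shows "a / b - a' / b' \<le> (1 - sm / sp) * r"
proof -
  have q_pos: "0 < q" using assms(3,10,2,1) by (smt (verit) mult_nonneg_nonpos)
  have "a / b \<le> r - sm * q2 / b" using assms(3,9) by (simp add: field_simps)
  also have "\<dots> \<le> r - sm * q2 / (sp * q)"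
    using assms(1,3,6,10) by (intro diff_left_mono divide_left_mono mult_nonneg_nonneg) auto
  finally have upper: "a / b \<le> r - sm * q2 / (sp * q)" .
  have "sm * q1 / (sp * q) \<le> sm * q1 / b'"
    using assms(1,4,5,12) by (intro divide_left_mono mult_nonneg_nonneg) auto
  also have "\<dots> \<le> a' / b'" using assms(4,11) by (simp add: divide_right_mono)
  finally have lower: "sm * q1 / (sp * q) \<le> a' / b'" .
  have "sm * q2 / (sp * q) + sm * q1 / (sp * q) = sm * (q1 + q2) / (sp * q)"
    by (simp add: add_divide_distrib algebra_simps)
  also have "\<dots> = sm * r / sp" using assms(7) q_pos by simp
  finally show ?thesis using upper lower by (simp add: field_simps)
qed

text \<open>If \<open>F G\<close> has zero \<open>\<mu>\<close>-integral for a weight \<open>G \<ge> 0\<close> of positive mass, then \<open>F\<close> takes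
  both signs on average, so every value of \<open>F\<close> is bounded by the oscillation of \<open>F\<close>.\<close>

lemma centred_ratio_bound:
  fixes \<mu> :: "'b measure" and F G :: "'b \<Rightarrow> real"
  assumes G_int: "integrable \<mu> G" and FG_int: "integrable \<mu> (\<lambda>z. F z * G z)"
    and G_nonneg: "\<And>z. z \<in> space \<mu> \<Longrightarrow> 0 \<le> G z" and G_mass: "0 < (\<integral>z. G z \<partial>\<mu>)"
    and centred: "(\<integral>z. F z * G z \<partial>\<mu>) = 0"
    and osc: "\<And>z. z \<in> space \<mu> \<Longrightarrow> \<bar>F y - F z\<bar> \<le> s"
  shows "\<bar>F y\<bar> \<le> s"
proof -
  define K where "K = (\<lambda>z. F y * G z - F z * G z)"
  have K_int: "integrable \<mu> K" unfolding K_def using G_int FG_int by simp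
  have "\<bar>F y\<bar> * (\<integral>z. G z \<partial>\<mu>) = \<bar>\<integral>z. K z \<partial>\<mu>\<bar>"
    unfolding K_def using G_int FG_int centred G_mass by (simp add: abs_mult)
  also have "\<dots> \<le> (\<integral>z. \<bar>K z\<bar> \<partial>\<mu>)" by (rule integral_abs_bound)
  also have "\<dots> \<le> (\<integral>z. s * G z \<partial>\<mu>)"
  proof (rule integral_mono)
    show "integrable \<mu> (\<lambda>z. \<bar>K z\<bar>)" using K_int by simp
    show "integrable \<mu> (\<lambda>z. s * G z)" using G_int by simp
    fix z assume z: "z \<in> space \<mu>"
    have "K z = (F y - F z) * G z" unfolding K_def by (simp add: algebra_simps)
    then have "\<bar>K z\<bar> = \<bar>F y - F z\<bar> * G z" using G_nonneg[OF z] by (simp add: abs_mult)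
    then show "\<bar>K z\<bar> \<le> s * G z" using osc[OF z] G_nonneg[OF z] by (simp add: mult_right_mono)
  qed
  also have "\<dots> = s * (\<integral>z. G z \<partial>\<mu>)" by simp
  finally show ?thesis using G_mass by simp
qed

lemma INF_Q1_le:
  assumes M_kernel: "\<And>p. M p \<in> X \<rightarrow>\<^sub>M prob_algebra X"
    and g_nonneg: "\<And>p x. x \<in> space X \<Longrightarrow> g p x \<ge> 0" and x: "x \<in> space X"
  shows "(INF px \<in> UNIV \<times> space X. Qop M g (fst px) (\<lambda>_. 1) (snd px)) \<le> Qop M g p (\<lambda>_. 1) x"
proof -
  have Q1_nonneg: "0 \<le> Qop M g p (\<lambda>_. 1) x" if x: "x \<in> space X" for p x
  proof -
    have "M p x \<in> space (prob_algebra X)" using measurable_space[OF M_kernel x] .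
    then have "space (M p x) = space X"
      by (auto simp: space_prob_algebra dest: sets_eq_imp_space_eq)
    then show ?thesis unfolding Qop_def using g_nonneg by (intro integral_nonneg_AE AE_I2) auto
  qed
  have "bdd_below ((\<lambda>px. Qop M g (fst px) (\<lambda>_. 1) (snd px)) ` (UNIV \<times> space X))"
    using Q1_nonneg by (intro bdd_belowI2[where m=0]) auto
  from cINF_lower[OF this, of "(p, x)"] show ?thesis using x by simp
qed

lemma SUP_w_ge:
  fixes w :: "nat \<Rightarrow> 'b \<Rightarrow> 'b \<Rightarrow> real"
  assumes "bdd_above ((\<lambda>(p, x, y). w p x y) ` (UNIV \<times> S \<times> S))" "x \<in> S" "y \<in> S"
  shows "w p x y \<le> (SUP pxy \<in> UNIV \<times> S \<times> S. w (fst pxy) (fst (snd pxy)) (snd (snd pxy)))"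
proof -
  have "(\<lambda>(p, x, y). w p x y) = (\<lambda>pxy. w (fst pxy) (fst (snd pxy)) (snd (snd pxy)))" by auto
  with assms(1) have bdd: "bdd_above ((\<lambda>pxy. w (fst pxy) (fst (snd pxy)) (snd (snd pxy))) ` (UNIV \<times> S \<times> S))"
    by simp
  have "(p, x, y) \<in> UNIV \<times> S \<times> S" using assms(2,3) by simp
  from cSUP_upper[OF this bdd] show ?thesis by simp
qed

lemma osc_ge:
  assumes "bounded (h ` space X)" "y \<in> space X" "y' \<in> space X"
  shows "h y - h y' \<le> osc X h"
proof -
  obtain C where C: "\<And>x. x \<in> space X \<Longrightarrow> \<bar>h x\<bar> \<le> C" using assms(1) unfolding bounded_real by auto
  have "bdd_above ((\<lambda>xy. \<bar>h (fst xy) - h (snd xy)\<bar>) ` (space X \<times> space X))"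
  proof (rule bdd_aboveI2)
    fix xy assume "xy \<in> space X \<times> space X"
    then show "\<bar>h (fst xy) - h (snd xy)\<bar> \<le> 2 * C"
      using abs_triangle_ineq4[of "h (fst xy)" "h (snd xy)"] C[of "fst xy"] C[of "snd xy"] by auto
  qed
  then have "\<bar>h (fst (y, y')) - h (snd (y, y'))\<bar> \<le> osc X h"
    unfolding osc_def using assms by (intro cSUP_upper) auto
  then show ?thesis by simp
qed

locale mixing_feynman_kac =
  fixes X :: "'a measure" and M :: "nat \<Rightarrow> 'a \<Rightarrow> 'a measure" and g :: "nat \<Rightarrow> 'a \<Rightarrow> real"
    and phi :: "'a measure" and sigm sigp c :: real
  assumes M_kernel: "\<And>p. M p \<in> X \<rightarrow>\<^sub>M prob_algebra X"
    and g_meas: "\<And>p. g p \<in> borel_measurable X"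
    and g_nonneg: "\<And>p x. x \<in> space X \<Longrightarrow> g p x \<ge> 0"
    and Q1_bdd: "\<And>p. bdd_above ((\<lambda>x. Qop M g p (\<lambda>_. 1) x) ` space X)"
    and phi_prob: "phi \<in> space (prob_algebra X)"
    and sig_pos: "0 < sigm" and sig_lt: "sigm < sigp"
    and MG1: "\<And>p x A. x \<in> space X \<Longrightarrow> A \<in> sets X \<Longrightarrow>
          sigm * measure phi A \<le> measure (M p x) A \<and> measure (M p x) A \<le> sigp * measure phi A"
    and c_pos: "0 < c"
    and c_le: "\<And>p x. x \<in> space X \<Longrightarrow> c \<le> Qop M g p (\<lambda>_. 1) x"
begin

definition bmeas :: "('a \<Rightarrow> real) \<Rightarrow> bool" where
  "bmeas f \<longleftrightarrow> f \<in> borel_measurable X \<and> (\<exists>C. \<forall>x\<in>space X. \<bar>f x\<bar> \<le> C)"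

lemma bmeasE:
  assumes "bmeas f" obtains C where "C \<ge> 0" "\<And>x. x \<in> space X \<Longrightarrow> \<bar>f x\<bar> \<le> C"
proof -
  from assms obtain C where "\<forall>x\<in>space X. \<bar>f x\<bar> \<le> C" unfolding bmeas_def by auto
  then show ?thesis using that[of "max C 0"] by force
qed

lemma bmeas_measurable: "bmeas f \<Longrightarrow> f \<in> borel_measurable X"
  by (simp add: bmeas_def)

lemma bmeas_const: "bmeas (\<lambda>_. a)"
  unfolding bmeas_def by auto

lemma bmeas_mult: assumes "bmeas f" "bmeas f'" shows "bmeas (\<lambda>y. f y * f' y)"
proof -
  obtain C where C: "C \<ge> 0" "\<And>x. x \<in> space X \<Longrightarrow> \<bar>f x\<bar> \<le> C" using bmeasE[OF assms(1)] by blast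
  obtain D where D: "D \<ge> 0" "\<And>x. x \<in> space X \<Longrightarrow> \<bar>f' x\<bar> \<le> D" using bmeasE[OF assms(2)] by blast
  have "\<forall>x\<in>space X. \<bar>f x * f' x\<bar> \<le> C * D"
    using C D by (auto simp: abs_mult intro: mult_mono)
  then show ?thesis using assms unfolding bmeas_def by (auto intro: borel_measurable_times)
qed

lemma bmeas_cmult: "bmeas f \<Longrightarrow> bmeas (\<lambda>y. a * f y)"
  using bmeas_mult[OF bmeas_const] .

lemma bmeas_diff: assumes "bmeas f" "bmeas f'" shows "bmeas (\<lambda>y. f y - f' y)"
proof -
  obtain C where C: "C \<ge> 0" "\<And>x. x \<in> space X \<Longrightarrow> \<bar>f x\<bar> \<le> C" using bmeasE[OF assms(1)] by blast
  obtain D where D: "D \<ge> 0" "\<And>x. x \<in> space X \<Longrightarrow> \<bar>f' x\<bar> \<le> D" using bmeasE[OF assms(2)] by blast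
  have "\<forall>x\<in>space X. \<bar>f x - f' x\<bar> \<le> C + D"
    using C D by (auto intro: abs_triangle_ineq4[THEN order_trans] add_mono)
  then show ?thesis using assms unfolding bmeas_def by (auto intro: borel_measurable_diff)
qed

lemma bmeas_divide:
  assumes "bmeas f" "bmeas B" "0 < b" "\<And>y. y \<in> space X \<Longrightarrow> b \<le> B y"
  shows "bmeas (\<lambda>y. f y / B y)"
proof -
  obtain C where C: "C \<ge> 0" "\<And>x. x \<in> space X \<Longrightarrow> \<bar>f x\<bar> \<le> C" using bmeasE[OF assms(1)] by blast
  have "\<bar>f x / B x\<bar> \<le> C / b" if "x \<in> space X" for x
  proof -
    have "\<bar>f x / B x\<bar> = \<bar>f x\<bar> / B x" using assms(3) assms(4)[OF that] by simp
    also have "\<dots> \<le> C / B x" using C(2)[OF that] assms(3) assms(4)[OF that] by (simp add: divide_right_mono)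
    also have "\<dots> \<le> C / b" using C(1) assms(3) assms(4)[OF that] by (simp add: divide_left_mono)
    finally show ?thesis .
  qed
  then show ?thesis using assms(1,2) unfolding bmeas_def by (auto intro: borel_measurable_divide)
qed

lemma M_facts:
  assumes "x \<in> space X"
  shows "prob_space (M p x)" "sets (M p x) = sets X" "space (M p x) = space X"
proof -
  have "M p x \<in> space (prob_algebra X)" using measurable_space[OF M_kernel assms] .
  then show "prob_space (M p x)" "sets (M p x) = sets X" "space (M p x) = space X"
    by (auto simp: space_prob_algebra dest: sets_eq_imp_space_eq)
qed

lemma phi_facts: "prob_space phi" "sets phi = sets X" "space phi = space X"
  using phi_prob by (auto simp: space_prob_algebra dest: sets_eq_imp_space_eq)

text \<open>Since \<open>Q_p 1 \<ge> c > 0\<close>, the potential is \<open>M_p(x,\<cdot>)\<close>-integrable (a non-integrable function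
  would have integral 0); hence so is \<open>g_{p+1} f\<close> for every bounded \<open>f\<close>.\<close>

lemma g_integrable: assumes "x \<in> space X" shows "integrable (M p x) (g (Suc p))"
proof (rule ccontr)
  assume "\<not> ?thesis"
  then have "Qop M g p (\<lambda>_. 1) x = 0" by (simp add: Qop_def not_integrable_integral_eq)
  with c_le[OF assms, of p] c_pos show False by simp
qed

lemma integrable_g_times:
  assumes x: "x \<in> space X" and f: "bmeas f"
  shows "integrable (M p x) (\<lambda>y. g (Suc p) y * f y)"
proof -
  obtain C where C: "C \<ge> 0" "\<And>x. x \<in> space X \<Longrightarrow> \<bar>f x\<bar> \<le> C" using bmeasE[OF f] by blast
  have dom: "integrable (M p x) (\<lambda>y. C * g (Suc p) y)" using g_integrable[OF x] by simp
  have "(\<lambda>y. g (Suc p) y * f y) \<in> borel_measurable X"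
    using g_meas bmeas_measurable[OF f] by (intro borel_measurable_times) auto
  then have meas: "(\<lambda>y. g (Suc p) y * f y) \<in> borel_measurable (M p x)"
    by (simp add: measurable_cong_sets[OF M_facts(2)[OF x] refl])
  have "AE y in M p x. norm (g (Suc p) y * f y) \<le> norm (C * g (Suc p) y)"
    using C g_nonneg M_facts(3)[OF x]
    by (auto intro!: AE_I2 simp: abs_mult mult_right_mono mult.commute)
  then show ?thesis by (rule Bochner_Integration.integrable_bound[OF dom meas])
qed

lemma Qop_measurable: assumes "f \<in> borel_measurable X" shows "Qop M g p f \<in> borel_measurable X"
proof -
  have "(\<lambda>N. integral\<^sup>L N (\<lambda>y. g (Suc p) y * f y)) \<in> subprob_algebra X \<rightarrow>\<^sub>M borel"
    using assms g_meas by (intro integral_measurable_subprob_algebra) auto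
  from measurable_compose[OF measurable_prob_algebraD[OF M_kernel] this]
  show ?thesis unfolding Qop_def by simp
qed

lemma Qop_cong:
  assumes "x \<in> space X" "\<And>y. y \<in> space X \<Longrightarrow> f y = f' y"
  shows "Qop M g p f x = Qop M g p f' x"
  unfolding Qop_def
  by (rule Bochner_Integration.integral_cong[OF refl]) (simp add: M_facts(3)[OF assms(1)] assms(2))

lemma Qop_mono:
  assumes x: "x \<in> space X" and "bmeas f" "bmeas f'" and le: "\<And>y. y \<in> space X \<Longrightarrow> f y \<le> f' y"
  shows "Qop M g p f x \<le> Qop M g p f' x"
  unfolding Qop_def
  using integrable_g_times[OF x assms(2)] integrable_g_times[OF x assms(3)] le g_nonneg M_facts(3)[OF x]
  by (intro integral_mono) (auto intro: mult_left_mono)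

lemma Qop_add:
  assumes x: "x \<in> space X" and "bmeas f" "bmeas f'"
  shows "Qop M g p (\<lambda>y. f y + f' y) x = Qop M g p f x + Qop M g p f' x"
  unfolding Qop_def
  using integrable_g_times[OF x assms(2)] integrable_g_times[OF x assms(3)]
  by (simp add: distrib_left)

lemma Qop_scale: "Qop M g p (\<lambda>y. a * f y) x = a * Qop M g p f x"
  unfolding Qop_def by (simp add: mult.left_commute)

lemma Qop_abs_le:
  assumes x: "x \<in> space X" and f: "bmeas f" and C: "\<And>y. y \<in> space X \<Longrightarrow> \<bar>f y\<bar> \<le> C"
  shows "\<bar>Qop M g p f x\<bar> \<le> C * Qop M g p (\<lambda>_. 1) x"
proof -
  have "Qop M g p f x \<le> Qop M g p (\<lambda>_. C * 1) x"
    using C by (intro Qop_mono[OF x f bmeas_const]) (auto simp: abs_le_iff)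
  moreover have "Qop M g p (\<lambda>_. - C * 1) x \<le> Qop M g p f x"
    using C by (intro Qop_mono[OF x bmeas_const f]) (force simp: abs_le_iff)
  ultimately show ?thesis by (simp only: Qop_scale abs_le_iff) simp
qed

lemma bmeas_Qop: assumes "bmeas f" shows "bmeas (Qop M g p f)"
proof -
  obtain C where C: "C \<ge> 0" "\<And>x. x \<in> space X \<Longrightarrow> \<bar>f x\<bar> \<le> C" using bmeasE[OF assms] by blast
  obtain B where B: "\<And>x. x \<in> space X \<Longrightarrow> Qop M g p (\<lambda>_. 1) x \<le> B"
    using Q1_bdd[of p] by (auto simp: bdd_above_def)
  have "\<forall>x\<in>space X. \<bar>Qop M g p f x\<bar> \<le> C * B"
    using Qop_abs_le[OF _ assms C(2)] B C(1) by (meson mult_left_mono order_trans)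
  then show ?thesis unfolding bmeas_def using Qop_measurable bmeas_measurable[OF assms] by blast
qed

lemma Qprod_Suc: "p < n \<Longrightarrow> Qprod M g p n f = Qop M g p (Qprod M g (Suc p) n f)"
  by (simp add: Qprod_def upt_conv_Cons)

lemma Qprod_ge: "n \<le> p \<Longrightarrow> Qprod M g p n f = f"
  by (simp add: Qprod_def)

lemma bmeas_Qprod: assumes "bmeas f" shows "bmeas (Qprod M g p n f)"
proof (cases "p \<le> n")
  case True then show ?thesis
  proof (induction p rule: inc_induct)
    case base then show ?case using assms by (simp add: Qprod_ge)
  next
    case (step q) then show ?case by (simp add: Qprod_Suc bmeas_Qop)
  qed
next
  case False then show ?thesis using assms by (simp add: Qprod_ge)
qed

lemma M_lower_measure: assumes x: "x \<in> space X" shows "scale_measure (ennreal sigm) phi \<le> M p x"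
proof -
  have "emeasure (scale_measure (ennreal sigm) phi) A \<le> emeasure (M p x) A" for A
  proof (cases "A \<in> sets X")
    case True
    have "ennreal sigm * emeasure phi A = ennreal (sigm * measure phi A)"
      using finite_measure.emeasure_eq_measure[OF prob_space.axioms(1)[OF phi_facts(1)]] sig_pos by (simp add: ennreal_mult)
    also have "\<dots> \<le> ennreal (measure (M p x) A)" using MG1[OF x True, of p] by simp
    also have "\<dots> = emeasure (M p x) A" using finite_measure.emeasure_eq_measure[OF prob_space.axioms(1)[OF M_facts(1)[OF x]]] by simp
    finally show ?thesis by simp
  next
    case False then show ?thesis using phi_facts M_facts[OF x] by (simp add: emeasure_notin_sets)
  qed
  then show ?thesis using phi_facts M_facts[OF x]
    by (simp add: le_measure_iff space_scale_measure le_fun_def)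
qed

lemma M_upper_measure: assumes x: "x \<in> space X" shows "M p x \<le> scale_measure (ennreal sigp) phi"
proof -
  have "emeasure (M p x) A \<le> emeasure (scale_measure (ennreal sigp) phi) A" for A
  proof (cases "A \<in> sets X")
    case True
    have "emeasure (M p x) A = ennreal (measure (M p x) A)"
      using finite_measure.emeasure_eq_measure[OF prob_space.axioms(1)[OF M_facts(1)[OF x]]] by simp
    also have "\<dots> \<le> ennreal (sigp * measure phi A)" using MG1[OF x True, of p] by (intro ennreal_leI) simp
    also have "\<dots> = ennreal sigp * emeasure phi A"
      using finite_measure.emeasure_eq_measure[OF prob_space.axioms(1)[OF phi_facts(1)]] sig_pos sig_lt by (simp add: ennreal_mult)
    finally show ?thesis by simp
  next
    case False then show ?thesis using phi_facts M_facts[OF x] by (simp add: emeasure_notin_sets)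
  qed
  then show ?thesis using phi_facts M_facts[OF x]
    by (simp add: le_measure_iff space_scale_measure le_fun_def)
qed

lemma M_nn_integral_bounds:
  fixes F :: "'a \<Rightarrow> real"
  assumes x: "x \<in> space X" and F: "F \<in> borel_measurable X"
  shows "ennreal sigm * (\<integral>\<^sup>+y. F y \<partial>phi) \<le> (\<integral>\<^sup>+y. F y \<partial>M p x)"
    and "(\<integral>\<^sup>+y. F y \<partial>M p x) \<le> ennreal sigp * (\<integral>\<^sup>+y. F y \<partial>phi)"
proof -
  have F_phi: "F \<in> borel_measurable phi" using F by (simp add: measurable_cong_sets[OF phi_facts(2) refl])
  have "ennreal sigm * (\<integral>\<^sup>+y. F y \<partial>phi) = (\<integral>\<^sup>+y. F y \<partial>scale_measure (ennreal sigm) phi)"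
    using F_phi by (simp add: nn_integral_scale_measure)
  also have "\<dots> \<le> (\<integral>\<^sup>+y. F y \<partial>M p x)"
    using M_facts[OF x] phi_facts by (intro nn_integral_mono_measure M_lower_measure[OF x]) simp
  finally show "ennreal sigm * (\<integral>\<^sup>+y. F y \<partial>phi) \<le> (\<integral>\<^sup>+y. F y \<partial>M p x)" .
  have "(\<integral>\<^sup>+y. F y \<partial>M p x) \<le> (\<integral>\<^sup>+y. F y \<partial>scale_measure (ennreal sigp) phi)"
    using M_facts[OF x] phi_facts by (intro nn_integral_mono_measure M_upper_measure[OF x]) simp
  also have "\<dots> = ennreal sigp * (\<integral>\<^sup>+y. F y \<partial>phi)"
    using F_phi by (simp add: nn_integral_scale_measure)
  finally show "(\<integral>\<^sup>+y. F y \<partial>M p x) \<le> ennreal sigp * (\<integral>\<^sup>+y. F y \<partial>phi)" .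
qed

lemma Qop_mixing:
  assumes x: "x \<in> space X" and v: "bmeas v" and v0: "\<And>y. y \<in> space X \<Longrightarrow> 0 \<le> v y"
  shows "integrable phi (\<lambda>y. g (Suc p) y * v y)"
    and "sigm * (\<integral>y. g (Suc p) y * v y \<partial>phi) \<le> Qop M g p v x"
    and "Qop M g p v x \<le> sigp * (\<integral>y. g (Suc p) y * v y \<partial>phi)"
proof -
  define F where "F = (\<lambda>y. g (Suc p) y * v y)"
  have F_meas: "F \<in> borel_measurable X"
    unfolding F_def using g_meas bmeas_measurable[OF v] by (intro borel_measurable_times) auto
  have F_nonneg: "\<And>y. y \<in> space X \<Longrightarrow> 0 \<le> F y" unfolding F_def using g_nonneg v0 by simp
  have Q_def: "Qop M g p v x = integral\<^sup>L (M p x) F" unfolding Qop_def F_def ..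
  have Q_nonneg: "0 \<le> Qop M g p v x"
    unfolding Q_def using F_nonneg M_facts(3)[OF x] by (intro integral_nonneg_AE AE_I2) auto
  have M_nn: "(\<integral>\<^sup>+y. F y \<partial>M p x) = ennreal (Qop M g p v x)"
    unfolding Q_def using F_nonneg M_facts(3)[OF x]
    by (intro nn_integral_eq_integral AE_I2) (auto simp: F_def integrable_g_times[OF x v])
  note lower = M_nn_integral_bounds(1)[OF x F_meas, of p]
    and upper = M_nn_integral_bounds(2)[OF x F_meas, of p]
  have "(\<integral>\<^sup>+y. F y \<partial>phi) \<noteq> \<infinity>"
    using lower sig_pos M_nn by (auto simp: ennreal_mult_top top_unique)
  then have phi_int: "integrable phi F"
    using F_meas F_nonneg phi_facts by (intro integrableI_nonneg AE_I2) (auto simp: less_top)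
  then show "integrable phi (\<lambda>y. g (Suc p) y * v y)" unfolding F_def .
  have I_nonneg: "0 \<le> integral\<^sup>L phi F" using F_nonneg phi_facts by (intro integral_nonneg_AE AE_I2) auto
  have phi_nn: "(\<integral>\<^sup>+y. F y \<partial>phi) = ennreal (integral\<^sup>L phi F)"
    using F_nonneg phi_facts by (intro nn_integral_eq_integral[OF phi_int] AE_I2) auto
  have "ennreal (sigm * integral\<^sup>L phi F) \<le> ennreal (Qop M g p v x)"
    using lower M_nn phi_nn sig_pos I_nonneg by (simp add: ennreal_mult)
  then show "sigm * (\<integral>y. g (Suc p) y * v y \<partial>phi) \<le> Qop M g p v x"
    using Q_nonneg unfolding F_def by (simp add: ennreal_le_iff)
  have "ennreal (Qop M g p v x) \<le> ennreal (sigp * integral\<^sup>L phi F)"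
    using upper M_nn phi_nn sig_pos sig_lt I_nonneg by (simp add: ennreal_mult)
  then show "Qop M g p v x \<le> sigp * (\<integral>y. g (Suc p) y * v y \<partial>phi)"
    using I_nonneg sig_pos sig_lt unfolding F_def by (simp add: ennreal_le_iff)
qed

definition G :: "nat \<Rightarrow> nat \<Rightarrow> 'a \<Rightarrow> real" where
  "G n p = Qprod M g p n (\<lambda>_. 1)"

lemma bmeas_G: "bmeas (G n p)"
  unfolding G_def by (rule bmeas_Qprod[OF bmeas_const])

lemma G_last: "G n n = (\<lambda>_. 1)"
  unfolding G_def by (simp add: Qprod_ge)

lemma G_Suc: "p < n \<Longrightarrow> G n p = Qop M g p (G n (Suc p))"
  unfolding G_def by (simp add: Qprod_Suc)

lemma G_lower: assumes "p \<le> n" shows "\<And>y. y \<in> space X \<Longrightarrow> c ^ (n - p) \<le> G n p y"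
  using assms
proof (induction p rule: inc_induct)
  case base then show ?case by (simp add: G_last)
next
  case (step q y)
  have "c ^ (n - q) = c ^ (n - Suc q) * c"
    using step(2) by (metis Suc_diff_Suc power_Suc2)
  also have "\<dots> \<le> c ^ (n - Suc q) * Qop M g q (\<lambda>_. 1) y"
    using c_le[OF step(4)] c_pos by (simp add: mult_left_mono)
  also have "\<dots> = Qop M g q (\<lambda>_. c ^ (n - Suc q)) y"
    using Qop_scale[of q "c ^ (n - Suc q)" "\<lambda>_. 1" y] by simp
  also have "\<dots> \<le> Qop M g q (G n (Suc q)) y"
    using step(3) by (intro Qop_mono[OF step(4) bmeas_const bmeas_G])
  also have "\<dots> = G n q y" using G_Suc[OF step(2)] by simp
  finally show ?case .
qed

lemma G_pos: "p \<le> n \<Longrightarrow> y \<in> space X \<Longrightarrow> 0 < G n p y"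
  using G_lower[of p n y] c_pos by (meson order_less_le_trans zero_less_power)

lemma G_ratio:
  assumes "p \<le> n" "y \<in> space X" "y' \<in> space X"
  shows "G n p y \<le> (sigp / sigm) * G n p y'"
proof (cases "p = n")
  case True then show ?thesis using sig_pos sig_lt by (simp add: G_last)
next
  case False
  then have pn: "p < n" using assms by simp
  define P where "P = (\<integral>z. g (Suc p) z * G n (Suc p) z \<partial>phi)"
  have G_nonneg: "\<And>z. z \<in> space X \<Longrightarrow> 0 \<le> G n (Suc p) z"
    using G_pos pn by (meson less_eq_real_def Suc_leI)
  have upper: "G n p y \<le> sigp * P"
    using Qop_mixing(3)[OF assms(2) bmeas_G G_nonneg] G_Suc[OF pn] by (simp add: P_def)
  have lower: "sigm * P \<le> G n p y'"
    using Qop_mixing(2)[OF assms(3) bmeas_G G_nonneg] G_Suc[OF pn] by (simp add: P_def)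
  have "sigp * P = (sigp / sigm) * (sigm * P)" using sig_pos by simp
  also have "\<dots> \<le> (sigp / sigm) * G n p y'" using lower sig_pos sig_lt by (intro mult_left_mono) auto
  finally show ?thesis using upper by simp
qed

lemma Qop_ratio_contraction:
  assumes x: "x \<in> space X" and x': "x' \<in> space X"
    and B: "bmeas B" and B0: "\<And>y. y \<in> space X \<Longrightarrow> 0 \<le> B y"
    and u: "bmeas u" and u0: "\<And>y. y \<in> space X \<Longrightarrow> 0 \<le> u y" and u1: "\<And>y. y \<in> space X \<Longrightarrow> u y \<le> r"
    and b: "0 < Qop M g p B x" and b': "0 < Qop M g p B x'"
  shows "Qop M g p (\<lambda>y. B y * u y) x / Qop M g p B x - Qop M g p (\<lambda>y. B y * u y) x' / Qop M g p B x'
         \<le> (1 - sigm / sigp) * r"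
proof -
  have Bu: "bmeas (\<lambda>y. B y * u y)" using bmeas_mult[OF B u] .
  have Bv: "bmeas (\<lambda>y. B y * (r - u y))" using bmeas_mult[OF B bmeas_diff[OF bmeas_const u]] .
  have Bu0: "\<And>y. y \<in> space X \<Longrightarrow> 0 \<le> B y * u y" using B0 u0 by simp
  have Bv0: "\<And>y. y \<in> space X \<Longrightarrow> 0 \<le> B y * (r - u y)" using B0 u1 by simp
  define q where "q = (\<integral>y. g (Suc p) y * B y \<partial>phi)"
  define q1 where "q1 = (\<integral>y. g (Suc p) y * (B y * u y) \<partial>phi)"
  define q2 where "q2 = (\<integral>y. g (Suc p) y * (B y * (r - u y)) \<partial>phi)"
  have q1_nonneg: "0 \<le> q1"
    unfolding q1_def using Bu0 g_nonneg phi_facts by (intro integral_nonneg_AE AE_I2) auto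
  have q2_nonneg: "0 \<le> q2"
    unfolding q2_def using Bv0 g_nonneg phi_facts by (intro integral_nonneg_AE AE_I2) auto
  have q2_eq: "q2 = r * q - q1"
  proof -
    have "q2 = (\<integral>y. r * (g (Suc p) y * B y) - g (Suc p) y * (B y * u y) \<partial>phi)"
      unfolding q2_def by (intro Bochner_Integration.integral_cong refl) (simp add: algebra_simps)
    also have "\<dots> = r * q - q1"
      using Qop_mixing(1)[OF x B B0] Qop_mixing(1)[OF x Bu Bu0] unfolding q_def q1_def by simp
    finally show ?thesis .
  qed
  have complement: "Qop M g p (\<lambda>y. B y * (r - u y)) x = r * Qop M g p B x - Qop M g p (\<lambda>y. B y * u y) x"
  proof -
    have "Qop M g p (\<lambda>y. B y * (r - u y)) x = Qop M g p (\<lambda>y. r * B y + (-1) * (B y * u y)) x"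
      by (intro Qop_cong[OF x]) (simp add: algebra_simps)
    also have "\<dots> = r * Qop M g p B x - Qop M g p (\<lambda>y. B y * u y) x"
      by (simp only: Qop_add[OF x bmeas_cmult[OF B] bmeas_cmult[OF Bu]] Qop_scale)
    finally show ?thesis .
  qed
  show ?thesis
  proof (rule two_point_contraction[OF sig_pos sig_lt b b' q1_nonneg q2_nonneg q2_eq])
    show "sigm * q1 \<le> Qop M g p (\<lambda>y. B y * u y) x" "sigm * q1 \<le> Qop M g p (\<lambda>y. B y * u y) x'"
      using Qop_mixing(2)[OF x Bu Bu0] Qop_mixing(2)[OF x' Bu Bu0] unfolding q1_def by auto
    show "sigm * q2 \<le> r * Qop M g p B x - Qop M g p (\<lambda>y. B y * u y) x"
      using Qop_mixing(2)[OF x Bv Bv0, of p] complement unfolding q2_def by simp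
    show "Qop M g p B x \<le> sigp * q" "Qop M g p B x' \<le> sigp * q"
      using Qop_mixing(3)[OF x B B0] Qop_mixing(3)[OF x' B B0] unfolding q_def by auto
  qed
qed

text \<open>The same step for a function with values in \<open>[m, m + r]\<close>: subtracting the constant \<open>m\<close>
  changes both weighted averages by \<open>m\<close>, by linearity of \<open>Q_p\<close>.\<close>

lemma Qop_ratio_contraction_shifted:
  assumes x: "x \<in> space X" and x': "x' \<in> space X"
    and B: "bmeas B" and B0: "\<And>y. y \<in> space X \<Longrightarrow> 0 \<le> B y"
    and F: "bmeas F" and F_bounds: "\<And>y. y \<in> space X \<Longrightarrow> m \<le> F y \<and> F y \<le> m + r"
    and b: "0 < Qop M g p B x" and b': "0 < Qop M g p B x'"
  shows "Qop M g p (\<lambda>y. B y * F y) x / Qop M g p B x - Qop M g p (\<lambda>y. B y * F y) x' / Qop M g p B x'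
         \<le> (1 - sigm / sigp) * r"
proof -
  define u where "u = (\<lambda>y. F y - m)"
  have u: "bmeas u" unfolding u_def by (rule bmeas_diff[OF F bmeas_const])
  have shift: "Qop M g p (\<lambda>y. B y * F y) z / Qop M g p B z = Qop M g p (\<lambda>y. B y * u y) z / Qop M g p B z + m"
    if z: "z \<in> space X" and bz: "0 < Qop M g p B z" for z
  proof -
    have "Qop M g p (\<lambda>y. B y * F y) z = Qop M g p (\<lambda>y. B y * u y + m * B y) z"
      by (intro Qop_cong[OF z]) (simp add: u_def algebra_simps)
    also have "\<dots> = Qop M g p (\<lambda>y. B y * u y) z + m * Qop M g p B z"
      using Qop_add[OF z bmeas_mult[OF B u] bmeas_cmult[OF B]] Qop_scale by simp
    finally show ?thesis using bz by (simp add: add_divide_distrib)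
  qed
  have "Qop M g p (\<lambda>y. B y * u y) x / Qop M g p B x - Qop M g p (\<lambda>y. B y * u y) x' / Qop M g p B x'
        \<le> (1 - sigm / sigp) * r"
    using F_bounds by (intro Qop_ratio_contraction[OF x x' B B0 u _ _ b b']) (force simp: u_def)+
  then show ?thesis unfolding shift[OF x b] shift[OF x' b'] by simp
qed

text \<open>In the step, \<open>Q_{p..n-1} f = Q_p(G n (p+1) F)\<close> with \<open>F = Q_{p+1..n-1} f / G n (p+1)\<close>,
  whose values lie, by induction, in an interval \<open>[m, m + r']\<close> with \<open>m = inf F\<close>.\<close>

lemma Qprod_ratio_contraction:
  assumes f: "bmeas f" and f_osc: "\<And>y y'. y \<in> space X \<Longrightarrow> y' \<in> space X \<Longrightarrow> f y - f y' \<le> r"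
    and pn: "p \<le> n"
  shows "\<And>x x'. x \<in> space X \<Longrightarrow> x' \<in> space X \<Longrightarrow>
    Qprod M g p n f x / G n p x - Qprod M g p n f x' / G n p x' \<le> (1 - sigm / sigp) ^ (n - p) * r"
  using pn
proof (induction p rule: inc_induct)
  case base then show ?case using f_osc by (simp add: G_last Qprod_ge)
next
  case (step p x x')
  note pn = step(2) and IH = step(3) and x = step(4) and x' = step(5)
  define B where "B = G n (Suc p)"
  define F where "F = (\<lambda>y. Qprod M g (Suc p) n f y / B y)"
  define r' where "r' = (1 - sigm / sigp) ^ (n - Suc p) * r"
  have B_pos: "\<And>y. y \<in> space X \<Longrightarrow> 0 < B y" unfolding B_def using G_pos pn by (simp add: Suc_leI)
  have B_lower: "\<And>y. y \<in> space X \<Longrightarrow> c ^ (n - Suc p) \<le> B y"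
    unfolding B_def using G_lower pn by (simp add: Suc_leI)
  have F: "bmeas F"
    unfolding F_def using bmeas_divide[OF bmeas_Qprod[OF f] _ _ B_lower] c_pos by (simp add: B_def bmeas_G)
  have F_osc: "\<And>y y'. y \<in> space X \<Longrightarrow> y' \<in> space X \<Longrightarrow> F y - F y' \<le> r'"
    unfolding F_def B_def r'_def using IH by simp
  define m where "m = (INF y\<in>space X. F y)"
  have "bdd_below (F ` space X)"
    using F_osc[OF x] by (intro bdd_belowI2[where m="F x - r'"]) (auto simp: algebra_simps)
  then have m_le: "\<And>y. y \<in> space X \<Longrightarrow> m \<le> F y" unfolding m_def by (rule cINF_lower)
  have m_ge: "\<And>y. y \<in> space X \<Longrightarrow> F y - r' \<le> m"
    unfolding m_def using x F_osc by (intro cINF_greatest) (auto simp: algebra_simps)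
  have Qprod_eq: "Qprod M g p n f z = Qop M g p (\<lambda>y. B y * F y) z" if z: "z \<in> space X" for z
    unfolding Qprod_Suc[OF pn] using B_pos by (intro Qop_cong[OF z]) (force simp: F_def)
  have G_eq: "G n p z = Qop M g p B z" for z unfolding B_def using G_Suc[OF pn] by simp
  have QB_pos: "\<And>z. z \<in> space X \<Longrightarrow> 0 < Qop M g p B z" using G_pos[of p n] pn G_eq by simp
  have "Qprod M g p n f x / G n p x - Qprod M g p n f x' / G n p x' \<le> (1 - sigm / sigp) * r'"
    unfolding Qprod_eq[OF x] Qprod_eq[OF x'] G_eq using m_le m_ge B_pos
    by (intro Qop_ratio_contraction_shifted[OF x x' _ _ F _ QB_pos[OF x] QB_pos[OF x']])
       (auto simp: B_def bmeas_G less_imp_le algebra_simps)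
  also have "\<dots> = (1 - sigm / sigp) ^ (n - p) * r"
    unfolding r'_def using pn by (simp add: Suc_diff_Suc[symmetric])
  finally show ?case .
qed

end

locale fk_variance = mixing_feynman_kac +
  fixes R :: "nat \<Rightarrow> 'a \<Rightarrow> 'a measure" and w :: "nat \<Rightarrow> 'a \<Rightarrow> 'a \<Rightarrow> real"
    and eta :: "nat \<Rightarrow> 'a measure" and W :: real
  assumes R_kernel: "\<And>p. R p \<in> X \<rightarrow>\<^sub>M prob_algebra X"
    and w_meas: "\<And>p. (\<lambda>(x, y). w p x y) \<in> borel_measurable (X \<Otimes>\<^sub>M X)"
    and w_nonneg: "\<And>p x y. x \<in> space X \<Longrightarrow> y \<in> space X \<Longrightarrow> w p x y \<ge> 0"
    and w_density: "\<And>p x. x \<in> space X \<Longrightarrow>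
          density (M p x) (\<lambda>y. ennreal (g (Suc p) y)) = density (R p x) (\<lambda>y. ennreal (w p x y))"
    and eta_prob: "\<And>p. eta p \<in> space (prob_algebra X)"
    and eta_flow: "\<And>p f. f \<in> borel_measurable X \<Longrightarrow> bounded (f ` space X) \<Longrightarrow>
          (\<integral>x. f x \<partial>(eta (Suc p))) =
          (\<integral>x. Qop M g p f x \<partial>(eta p)) / (\<integral>x. Qop M g p (\<lambda>_. 1) x \<partial>(eta p))"
    and W_ge: "\<And>p x y. x \<in> space X \<Longrightarrow> y \<in> space X \<Longrightarrow> w p x y \<le> W"
begin

lemma eta_facts: "prob_space (eta p)" "sets (eta p) = sets X" "space (eta p) = space X"
  using eta_prob[of p] by (auto simp: space_prob_algebra dest: sets_eq_imp_space_eq)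

lemma R_facts:
  assumes "x \<in> space X"
  shows "sets (R p x) = sets X" "space (R p x) = space X"
proof -
  have "R p x \<in> space (prob_algebra X)" using measurable_space[OF R_kernel assms] .
  then show "sets (R p x) = sets X" "space (R p x) = space X"
    by (auto simp: space_prob_algebra dest: sets_eq_imp_space_eq)
qed

lemma W_nonneg: "0 \<le> W"
proof -
  obtain x where x: "x \<in> space X" using prob_space.not_empty[OF eta_facts(1)] eta_facts(3) by blast
  show ?thesis using w_nonneg[OF x x, of 0] W_ge[OF x x, of 0] by simp
qed

lemma integrable_eta: assumes "bmeas f" shows "integrable (eta p) f"
proof -
  obtain C where C: "C \<ge> 0" "\<And>x. x \<in> space X \<Longrightarrow> \<bar>f x\<bar> \<le> C" using bmeasE[OF assms] by blast
  have "f \<in> borel_measurable (eta p)"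
    using bmeas_measurable[OF assms] by (simp add: measurable_cong_sets[OF eta_facts(2) refl])
  then show ?thesis
    using finite_measure.integrable_const_bound[OF prob_space.axioms(1)[OF eta_facts(1)], of f C] C eta_facts(3)
    by (auto intro!: AE_I2)
qed

definition Z :: "nat \<Rightarrow> real" where
  "Z p = (\<integral>x. Qop M g p (\<lambda>_. 1) x \<partial>(eta p))"

lemma Z_ge: "c \<le> Z p"
proof -
  have "(\<integral>x. c \<partial>(eta p)) \<le> Z p" unfolding Z_def
    using c_le eta_facts(3) integrable_eta[OF bmeas_Qop[OF bmeas_const]] integrable_eta[OF bmeas_const]
    by (intro integral_mono) auto
  then show ?thesis using prob_space.prob_space[OF eta_facts(1)] by simp
qed

lemma Z_pos: "0 < Z p"
  using Z_ge c_pos by (meson order_less_le_trans)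

lemma eta_Suc: assumes "bmeas f" shows "(\<integral>x. f x \<partial>eta (Suc p)) = (\<integral>x. Qop M g p f x \<partial>eta p) / Z p"
proof -
  obtain C where "\<And>x. x \<in> space X \<Longrightarrow> \<bar>f x\<bar> \<le> C" using bmeasE[OF assms] by blast
  then have "bounded (f ` space X)" unfolding bounded_real by auto
  then show ?thesis unfolding Z_def using eta_flow bmeas_measurable[OF assms] by simp
qed

lemma mean_G_pos: assumes "p \<le> n" shows "0 < (\<integral>x. G n p x \<partial>eta q)"
proof -
  have "(\<integral>x. c ^ (n - p) \<partial>eta q) \<le> (\<integral>x. G n p x \<partial>eta q)"
    using G_lower[OF assms] eta_facts(3) integrable_eta[OF bmeas_G] integrable_eta[OF bmeas_const]
    by (intro integral_mono) auto
  then have "c ^ (n - p) \<le> (\<integral>x. G n p x \<partial>eta q)"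
    using prob_space.prob_space[OF eta_facts(1)] by simp
  then show ?thesis using c_pos by (meson order_less_le_trans zero_less_power)
qed

lemma mean_G_Suc: "l < n \<Longrightarrow> (\<integral>x. G n l x \<partial>eta l) = (\<integral>x. G n (Suc l) x \<partial>eta (Suc l)) * Z l"
  using eta_Suc[OF bmeas_G[of n "Suc l"], of l] G_Suc[of l n] Z_pos[of l] by simp

lemma G_le_mean:
  assumes "p \<le> n" "y \<in> space X"
  shows "G n p y \<le> (sigp / sigm) * (\<integral>z. G n p z \<partial>eta q)"
proof -
  have "(\<integral>z. G n p y \<partial>eta q) \<le> (\<integral>z. (sigp / sigm) * G n p z \<partial>eta q)"
    using G_ratio[OF assms] eta_facts(3)
    by (intro integral_mono integrable_eta bmeas_const bmeas_cmult bmeas_G) auto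
  then show ?thesis using prob_space.prob_space[OF eta_facts(1)] by simp
qed

lemma eta_Qprod:
  assumes f: "bmeas f" and pn: "p \<le> n"
  shows "(\<integral>x. f x \<partial>eta n) = (\<integral>x. Qprod M g p n f x \<partial>eta p) / (\<integral>x. G n p x \<partial>eta p)"
  using pn
proof (induction p rule: inc_induct)
  case base then show ?case using prob_space.prob_space[OF eta_facts(1)] by (simp add: Qprod_ge G_last)
next
  case (step p)
  have "(\<integral>x. f x \<partial>eta n) = (\<integral>x. Qprod M g (Suc p) n f x \<partial>eta (Suc p)) / (\<integral>x. G n (Suc p) x \<partial>eta (Suc p))"
    by (rule step(3))
  also have "\<dots> = ((\<integral>x. Qprod M g p n f x \<partial>eta p) / Z p) / ((\<integral>x. G n p x \<partial>eta p) / Z p)"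
    using eta_Suc[OF bmeas_Qprod[OF f]] eta_Suc[OF bmeas_G] Qprod_Suc[OF step(2)] G_Suc[OF step(2)] by simp
  also have "\<dots> = (\<integral>x. Qprod M g p n f x \<partial>eta p) / (\<integral>x. G n p x \<partial>eta p)"
    using Z_pos[of p] by simp
  finally show ?case .
qed

text \<open>Part (2): propagating the centred function \<open>h - eta_n h\<close> from time \<open>l+1\<close> gives a function
  dominated by \<open>rho^(n-l-1) osc(h) G n (l+1)\<close>, since its ratio to \<open>G n (l+1)\<close> is centred
  under the \<open>G\<close>-weighted \<open>eta_{l+1}\<close> and has small oscillation.\<close>

lemma centred_Qprod_bound:
  assumes h: "bmeas h" and h_osc: "\<And>y y'. y \<in> space X \<Longrightarrow> y' \<in> space X \<Longrightarrow> h y - h y' \<le> r"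
    and ln: "l < n" and y: "y \<in> space X"
  shows "\<bar>Qprod M g (Suc l) n (\<lambda>z. h z - (\<integral>u. h u \<partial>eta n)) y\<bar>
         \<le> (1 - sigm / sigp) ^ (n - Suc l) * r * G n (Suc l) y"
proof -
  define H where "H = (\<lambda>z. h z - (\<integral>u. h u \<partial>eta n))"
  define D where "D = Qprod M g (Suc l) n H"
  define Gb where "Gb = G n (Suc l)"
  define F where "F = (\<lambda>z. D z / Gb z)"
  have sl: "Suc l \<le> n" using ln by simp
  have H: "bmeas H" unfolding H_def by (rule bmeas_diff[OF h bmeas_const])
  have D: "bmeas D" unfolding D_def by (rule bmeas_Qprod[OF H])
  have Gb_pos: "\<And>z. z \<in> space X \<Longrightarrow> 0 < Gb z" unfolding Gb_def using G_pos[OF sl] by simp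
  have D_eq: "D z = F z * Gb z" if "z \<in> space X" for z
    unfolding F_def using Gb_pos[OF that] by simp
  have H_centred: "(\<integral>x. H x \<partial>eta n) = 0"
    unfolding H_def
    using Bochner_Integration.integral_diff[OF integrable_eta[OF h] integrable_eta[OF bmeas_const], of n]
      prob_space.prob_space[OF eta_facts(1), of n] by simp
  have D_centred: "(\<integral>x. D x \<partial>eta (Suc l)) = 0"
    using eta_Qprod[OF H sl] H_centred mean_G_pos[OF sl, of "Suc l"] unfolding D_def by simp
  have "\<bar>F y\<bar> \<le> (1 - sigm / sigp) ^ (n - Suc l) * r"
  proof (rule centred_ratio_bound[where \<mu>="eta (Suc l)" and G=Gb])
    show "integrable (eta (Suc l)) Gb" unfolding Gb_def by (rule integrable_eta[OF bmeas_G])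
    have "integrable (eta (Suc l)) D = integrable (eta (Suc l)) (\<lambda>z. F z * Gb z)"
      using D_eq eta_facts(3) by (intro Bochner_Integration.integrable_cong) auto
    then show "integrable (eta (Suc l)) (\<lambda>z. F z * Gb z)" using integrable_eta[OF D] by simp
    have "(\<integral>z. D z \<partial>eta (Suc l)) = (\<integral>z. F z * Gb z \<partial>eta (Suc l))"
      using D_eq eta_facts(3) by (intro Bochner_Integration.integral_cong) auto
    then show "(\<integral>z. F z * Gb z \<partial>eta (Suc l)) = 0" using D_centred by simp
    show "0 < (\<integral>z. Gb z \<partial>eta (Suc l))" unfolding Gb_def by (rule mean_G_pos[OF sl])
    fix z assume "z \<in> space (eta (Suc l))"
    then have z: "z \<in> space X" using eta_facts(3) by simp
    show "0 \<le> Gb z" using Gb_pos[OF z] by simp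
    show "\<bar>F y - F z\<bar> \<le> (1 - sigm / sigp) ^ (n - Suc l) * r"
      using Qprod_ratio_contraction[OF H _ sl y z] Qprod_ratio_contraction[OF H _ sl z y] h_osc
      unfolding F_def D_def Gb_def H_def by (simp add: abs_le_iff)
  qed
  then show ?thesis
    using D_eq[OF y] Gb_pos[OF y] unfolding D_def H_def Gb_def by (simp add: abs_mult mult_right_mono)
qed

text \<open>Since \<open>w_l(x,\<cdot>) dR_l(x,\<cdot>) = g_{l+1} dM_l(x,\<cdot>)\<close>, integrating
  \<open>w_l v\<close> against \<open>R_l\<close> gives \<open>Q_l v\<close>; with \<open>w_l \<le> W\<close> this yields \<open>R_l(w_l^2 v) \<le> W Q_l v\<close>.\<close>

lemma R_weight_integral:
  assumes x: "x \<in> space X" and v: "bmeas v" and v0: "\<And>y. y \<in> space X \<Longrightarrow> 0 \<le> v y"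
  shows "(\<integral>\<^sup>+y. ennreal (w l x y) * ennreal (v y) \<partial>R l x) = ennreal (Qop M g l v x)"
proof -
  have wR: "(\<lambda>y. w l x y) \<in> borel_measurable (R l x)"
    using measurable_Pair2[OF w_meas[of l] x] by (simp add: measurable_cong_sets[OF R_facts(1)[OF x] refl])
  have vR: "v \<in> borel_measurable (R l x)"
    using bmeas_measurable[OF v] by (simp add: measurable_cong_sets[OF R_facts(1)[OF x] refl])
  have vM: "v \<in> borel_measurable (M l x)"
    using bmeas_measurable[OF v] by (simp add: measurable_cong_sets[OF M_facts(2)[OF x] refl])
  have gM: "g (Suc l) \<in> borel_measurable (M l x)"
    using g_meas by (simp add: measurable_cong_sets[OF M_facts(2)[OF x] refl])
  have "(\<integral>\<^sup>+y. ennreal (w l x y) * ennreal (v y) \<partial>R l x)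
      = (\<integral>\<^sup>+y. ennreal (v y) \<partial>density (R l x) (\<lambda>y. ennreal (w l x y)))"
    using wR vR by (simp add: nn_integral_density)
  also have "\<dots> = (\<integral>\<^sup>+y. ennreal (v y) \<partial>density (M l x) (\<lambda>y. ennreal (g (Suc l) y)))"
    using w_density[OF x, of l] by simp
  also have "\<dots> = (\<integral>\<^sup>+y. ennreal (g (Suc l) y) * ennreal (v y) \<partial>M l x)"
    using gM vM by (simp add: nn_integral_density)
  also have "\<dots> = (\<integral>\<^sup>+y. ennreal (g (Suc l) y * v y) \<partial>M l x)"
    using g_nonneg v0 M_facts(3)[OF x] by (intro nn_integral_cong) (simp add: ennreal_mult)
  also have "\<dots> = ennreal (Qop M g l v x)"
    unfolding Qop_def using g_nonneg v0 M_facts(3)[OF x]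
    by (intro nn_integral_eq_integral integrable_g_times[OF x v] AE_I2) auto
  finally show ?thesis .
qed

lemma R_change_of_measure:
  assumes x: "x \<in> space X" and v: "bmeas v" and v0: "\<And>y. y \<in> space X \<Longrightarrow> 0 \<le> v y"
  shows "(\<integral>y. (w l x y)\<^sup>2 * v y \<partial>R l x) \<le> W * Qop M g l v x"
proof -
  have wvR: "(\<lambda>y. (w l x y)\<^sup>2 * v y) \<in> borel_measurable (R l x)"
    using measurable_Pair2[OF w_meas[of l] x] bmeas_measurable[OF v]
    by (simp add: measurable_cong_sets[OF R_facts(1)[OF x] refl])
  have Q_nonneg: "0 \<le> Qop M g l v x"
    unfolding Qop_def using g_nonneg v0 M_facts(3)[OF x] by (intro integral_nonneg_AE AE_I2) auto
  have "(\<integral>\<^sup>+y. ennreal ((w l x y)\<^sup>2 * v y) \<partial>R l x)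
      \<le> (\<integral>\<^sup>+y. ennreal W * (ennreal (w l x y) * ennreal (v y)) \<partial>R l x)"
  proof (intro nn_integral_mono)
    fix y assume "y \<in> space (R l x)"
    then have y: "y \<in> space X" using R_facts(2)[OF x] by simp
    have "(w l x y)\<^sup>2 * v y \<le> W * (w l x y * v y)"
      unfolding power2_eq_square using W_ge[OF x y] w_nonneg[OF x y] v0[OF y]
      by (simp add: mult.assoc mult_right_mono)
    then show "ennreal ((w l x y)\<^sup>2 * v y) \<le> ennreal W * (ennreal (w l x y) * ennreal (v y))"
      using W_nonneg w_nonneg[OF x y] v0[OF y] by (simp add: ennreal_mult[symmetric] ennreal_leI)
  qed
  also have "\<dots> = ennreal W * ennreal (Qop M g l v x)"
    using measurable_Pair2[OF w_meas[of l] x] bmeas_measurable[OF v]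
    by (simp add: nn_integral_cmult measurable_cong_sets[OF R_facts(1)[OF x] refl] R_weight_integral[OF x v v0])
  finally have nn_le: "(\<integral>\<^sup>+y. ennreal ((w l x y)\<^sup>2 * v y) \<partial>R l x) \<le> ennreal W * ennreal (Qop M g l v x)" .
  have "(\<integral>y. (w l x y)\<^sup>2 * v y \<partial>R l x) = enn2real (\<integral>\<^sup>+y. ennreal ((w l x y)\<^sup>2 * v y) \<partial>R l x)"
    using wvR v0 R_facts(2)[OF x] by (intro integral_eq_nn_integral AE_I2) auto
  also have "\<dots> \<le> enn2real (ennreal W * ennreal (Qop M g l v x))"
    using nn_le by (intro enn2real_mono) (auto simp: ennreal_mult_less_top)
  also have "\<dots> = W * Qop M g l v x" using W_nonneg Q_nonneg by (simp add: ennreal_mult[symmetric])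
  finally show ?thesis .
qed

text \<open>Squaring part (2) and replacing one factor \<open>G n (l+1) y\<close> by its mean (\<open>G_le_mean\<close>).\<close>

lemma centred_Qprod_square_bound:
  assumes h: "bmeas h" and h_osc: "\<And>y y'. y \<in> space X \<Longrightarrow> y' \<in> space X \<Longrightarrow> h y - h y' \<le> r"
    and ln: "l < n" and y: "y \<in> space X"
  shows "(Qprod M g (Suc l) n (\<lambda>z. h z - (\<integral>u. h u \<partial>eta n)) y)\<^sup>2
         \<le> ((1 - sigm / sigp) ^ (n - Suc l) * r)\<^sup>2 * (sigp / sigm)
             * (\<integral>z. G n (Suc l) z \<partial>eta (Suc l)) * G n (Suc l) y"
    (is "?D\<^sup>2 \<le> ?s\<^sup>2 * ?K * ?Gbar * ?G")
proof -
  have "?D\<^sup>2 \<le> (?s * ?G)\<^sup>2"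
    using centred_Qprod_bound[OF h h_osc ln y] by (metis abs_ge_zero power2_abs power_mono)
  also have "\<dots> = ?s\<^sup>2 * ?G * ?G" by (simp add: power2_eq_square)
  also have "\<dots> \<le> ?s\<^sup>2 * ?G * (?K * ?Gbar)"
    using G_le_mean[of "Suc l" n y] G_pos[of "Suc l" n y] ln y by (intro mult_left_mono) auto
  finally show ?thesis by (simp add: algebra_simps)
qed

text \<open>Numerator of the \<open>l\<close>-th summand: if \<open>D^2 \<le> C G n (l+1)\<close>, then by part (3) and
  \<open>Q_l G n (l+1) = G n l\<close>, \<open>eta_l R_l(w_l^2 D^2) \<le> W C eta_l G n l\<close>.\<close>

lemma weighted_square_mean_bound:
  assumes D: "bmeas D" and C: "0 \<le> C" and ln: "l < n"
    and D_sq: "\<And>y. y \<in> space X \<Longrightarrow> (D y)\<^sup>2 \<le> C * G n (Suc l) y"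
  shows "(\<integral>x. (\<integral>y. (w l x y)\<^sup>2 * (D y)\<^sup>2 \<partial>R l x) \<partial>eta l) \<le> W * C * (\<integral>x. G n l x \<partial>eta l)"
proof -
  have inner: "(\<integral>y. (w l x y)\<^sup>2 * (D y)\<^sup>2 \<partial>R l x) \<le> W * C * G n l x" if x: "x \<in> space X" for x
  proof -
    have "(\<integral>y. (w l x y)\<^sup>2 * (D y)\<^sup>2 \<partial>R l x) \<le> W * Qop M g l (\<lambda>y. (D y)\<^sup>2) x"
      using R_change_of_measure[OF x, of "\<lambda>y. (D y)\<^sup>2"] bmeas_mult[OF D D] by (simp add: power2_eq_square)
    also have "\<dots> \<le> W * Qop M g l (\<lambda>y. C * G n (Suc l) y) x"
      using W_nonneg D_sq bmeas_mult[OF D D] bmeas_cmult[OF bmeas_G]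
      by (intro mult_left_mono Qop_mono[OF x]) (auto simp: power2_eq_square)
    also have "\<dots> = W * C * G n l x" using Qop_scale G_Suc[OF ln] by simp
    finally show ?thesis .
  qed
  have "(\<integral>x. (\<integral>y. (w l x y)\<^sup>2 * (D y)\<^sup>2 \<partial>R l x) \<partial>eta l) \<le> (\<integral>x. W * C * G n l x \<partial>eta l)"
  proof (rule integral_mono_AE')
    show "integrable (eta l) (\<lambda>x. W * C * G n l x)" by (intro integrable_eta bmeas_cmult bmeas_G)
    show "AE x in eta l. (\<integral>y. (w l x y)\<^sup>2 * (D y)\<^sup>2 \<partial>R l x) \<le> W * C * G n l x"
      using inner eta_facts(3) by (intro AE_I2) auto
    show "AE x in eta l. 0 \<le> W * C * G n l x"
      using G_pos[of l n] ln eta_facts(3) W_nonneg C by (intro AE_I2) (simp add: less_imp_le)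
  qed
  then show ?thesis by simp
qed

text \<open>Part (4): the \<open>l\<close>-th summand of \<open>sigma_n^2(h)\<close> is at most \<open>W s^2 (sigp/sigm) / c\<close> with
  \<open>s = rho^(n-l-1) osc(h)\<close>: the numerator is at most \<open>W s^2 (sigp/sigm) Gbar (Gbar Z_l)\<close> and the
  denominator equals \<open>(Gbar Z_l)^2\<close>, where \<open>Gbar = eta_{l+1} G n (l+1)\<close> and \<open>Z_l \<ge> c\<close>.\<close>

lemma variance_term_bound:
  assumes h: "bmeas h" and h_osc: "\<And>y y'. y \<in> space X \<Longrightarrow> y' \<in> space X \<Longrightarrow> h y - h y' \<le> r"
    and ln: "l < n"
  shows "(\<integral>x. (\<integral>y. (w l x y)\<^sup>2 *
              (Qprod M g (Suc l) n (\<lambda>z. h z - (\<integral>u. h u \<partial>eta n)) y)\<^sup>2 \<partial>(R l x)) \<partial>(eta l))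
        / (\<integral>x. Qprod M g l n (\<lambda>_. 1) x \<partial>(eta l))\<^sup>2
      \<le> W * ((1 - sigm / sigp) ^ (n - Suc l) * r)\<^sup>2 * (sigp / sigm) / c"
proof -
  define D where "D = Qprod M g (Suc l) n (\<lambda>z. h z - (\<integral>u. h u \<partial>eta n))"
  define s where "s = (1 - sigm / sigp) ^ (n - Suc l) * r"
  define K where "K = sigp / sigm"
  define Gbar where "Gbar = (\<integral>x. G n (Suc l) x \<partial>eta (Suc l))"
  have Gbar_pos: "0 < Gbar" unfolding Gbar_def using ln by (intro mean_G_pos) simp
  have C_nonneg: "0 \<le> s\<^sup>2 * K * Gbar" unfolding K_def using Gbar_pos sig_pos sig_lt by simp
  have mean: "(\<integral>x. G n l x \<partial>eta l) = Gbar * Z l" using mean_G_Suc[OF ln] unfolding Gbar_def .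
  have numerator: "(\<integral>x. (\<integral>y. (w l x y)\<^sup>2 * (D y)\<^sup>2 \<partial>R l x) \<partial>eta l) \<le> W * (s\<^sup>2 * K * Gbar) * (Gbar * Z l)"
    using weighted_square_mean_bound[OF _ C_nonneg ln] centred_Qprod_square_bound[OF h h_osc ln]
    unfolding mean D_def s_def K_def Gbar_def by (simp add: bmeas_Qprod bmeas_diff h bmeas_const)
  have "(\<integral>x. (\<integral>y. (w l x y)\<^sup>2 * (D y)\<^sup>2 \<partial>R l x) \<partial>eta l) / (Gbar * Z l)\<^sup>2
       \<le> W * (s\<^sup>2 * K * Gbar) * (Gbar * Z l) / (Gbar * Z l)\<^sup>2"
    using numerator by (intro divide_right_mono) simp_all
  also have "\<dots> = W * s\<^sup>2 * K / Z l"
    using Gbar_pos Z_pos[of l] by (simp add: power2_eq_square field_simps)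
  also have "\<dots> \<le> W * s\<^sup>2 * K / c"
    using W_nonneg Z_ge[of l] c_pos sig_pos sig_lt unfolding K_def
    by (intro divide_left_mono mult_nonneg_nonneg) auto
  finally show ?thesis using mean unfolding G_def D_def s_def K_def by simp
qed

text \<open>Summing the terms: \<open>sigma_n^2(h) \<le> (W r^2 K / c) sum_j (j+1) rho^(2j)\<close>, then use
  \<open>weighted_geometric_sum_le\<close> and \<open>K = 1/(1 - rho) \<le> 1/(1 - rho)^2\<close>.\<close>

lemma sigma2_bound:
  assumes h: "bmeas h" and h_osc: "\<And>y y'. y \<in> space X \<Longrightarrow> y' \<in> space X \<Longrightarrow> h y - h y' \<le> r"
  shows "sigma2 X M g R w eta n h
     \<le> W * r\<^sup>2 / ((1 - (1 - sigm / sigp))\<^sup>2 * (1 - (1 - sigm / sigp)\<^sup>2)\<^sup>2 * c)"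
proof -
  define \<rho> where "\<rho> = 1 - sigm / sigp"
  define q where "q = \<rho>\<^sup>2"
  define K where "K = sigp / sigm"
  have \<rho>_bounds: "0 < \<rho>" "\<rho> < 1" unfolding \<rho>_def using sig_pos sig_lt by (auto simp: field_simps)
  have q_bounds: "0 \<le> q" "q < 1" unfolding q_def using \<rho>_bounds power_strict_mono[of \<rho> 1 2] by auto
  have K_eq: "K = 1 / (1 - \<rho>)" unfolding K_def \<rho>_def using sig_pos by simp
  have K_nonneg: "0 \<le> K" unfolding K_eq using \<rho>_bounds by simp
  have "sigma2 X M g R w eta n h \<le> (\<Sum>l<n. real (n - l) * (W * (\<rho> ^ (n - Suc l) * r)\<^sup>2 * K / c))"
    unfolding sigma2_def
  proof (rule sum_mono)
    fix l assume "l \<in> {..<n}"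
    from variance_term_bound[OF h h_osc, of l n] this
    show "real (n - l) * (\<integral>x. (\<integral>y. (w l x y)\<^sup>2 * (Qprod M g (Suc l) n (\<lambda>z. h z - (\<integral>u. h u \<partial>eta n)) y)\<^sup>2
            \<partial>R l x) \<partial>eta l) / (\<integral>x. Qprod M g l n (\<lambda>_. 1) x \<partial>eta l)\<^sup>2
          \<le> real (n - l) * (W * (\<rho> ^ (n - Suc l) * r)\<^sup>2 * K / c)"
      unfolding \<rho>_def K_def times_divide_eq_right[symmetric] by (intro mult_left_mono) auto
  qed
  also have "\<dots> = (W * r\<^sup>2 * K / c) * (\<Sum>l<n. real (Suc (n - Suc l)) * q ^ (n - Suc l))"
    unfolding sum_distrib_left q_def
    by (intro sum.cong refl) (simp add: power_mult_distrib power_mult[symmetric] mult.commute Suc_diff_Suc)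
  also have "(\<Sum>l<n. real (Suc (n - Suc l)) * q ^ (n - Suc l)) = (\<Sum>j<n. real (Suc j) * q ^ j)"
    by (rule sum.nat_diff_reindex)
  also have "(W * r\<^sup>2 * K / c) * (\<Sum>j<n. real (Suc j) * q ^ j) \<le> (W * r\<^sup>2 * K / c) * (1 / (1 - q)\<^sup>2)"
    using W_nonneg K_nonneg c_pos weighted_geometric_sum_le[OF q_bounds] by (intro mult_left_mono) auto
  also have "\<dots> \<le> W * r\<^sup>2 / ((1 - \<rho>)\<^sup>2 * (1 - q)\<^sup>2 * c)"
  proof -
    have "K \<le> 1 / (1 - \<rho>)\<^sup>2"
      unfolding K_eq using \<rho>_bounds by (simp add: divide_simps power2_eq_square mult_le_cancel_left1)
    then have "(W * r\<^sup>2 / c / (1 - q)\<^sup>2) * K \<le> (W * r\<^sup>2 / c / (1 - q)\<^sup>2) * (1 / (1 - \<rho>)\<^sup>2)"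
      using W_nonneg c_pos by (intro mult_left_mono) auto
    then show ?thesis by (simp add: field_simps)
  qed
  finally show ?thesis unfolding q_def \<rho>_def .
qed

end

theorem mainTheorem14:
  fixes X :: "'a measure"
    and M R :: "nat \<Rightarrow> 'a \<Rightarrow> 'a measure"
    and g :: "nat \<Rightarrow> 'a \<Rightarrow> real"
    and w :: "nat \<Rightarrow> 'a \<Rightarrow> 'a \<Rightarrow> real"
    and eta :: "nat \<Rightarrow> 'a measure"
    and phi :: "'a measure"
    and sigm sigp :: real
    and n :: nat and h :: "'a \<Rightarrow> real"
  assumes M_kernel: "\<And>p. M p \<in> X \<rightarrow>\<^sub>M prob_algebra X"
    and R_kernel: "\<And>p. R p \<in> X \<rightarrow>\<^sub>M prob_algebra X"
    and g_meas: "\<And>p. g p \<in> borel_measurable X"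
    and g_nonneg: "\<And>p x. x \<in> space X \<Longrightarrow> g p x \<ge> 0"
    and Q1_bdd: "\<And>p. bdd_above ((\<lambda>x. Qop M g p (\<lambda>_. 1) x) ` space X)"
    and w_meas: "\<And>p. (\<lambda>(x, y). w p x y) \<in> borel_measurable (X \<Otimes>\<^sub>M X)"
    and w_nonneg: "\<And>p x y. x \<in> space X \<Longrightarrow> y \<in> space X \<Longrightarrow> w p x y \<ge> 0"
    and w_bdd: "\<And>p. bdd_above ((\<lambda>(x, y). w p x y) ` (space X \<times> space X))"
    and w_density: "\<And>p x. x \<in> space X \<Longrightarrow>
          density (M p x) (\<lambda>y. ennreal (g (Suc p) y)) = density (R p x) (\<lambda>y. ennreal (w p x y))"
    and eta0: "eta 0 \<in> space (prob_algebra X)"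
    and eta_prob: "\<And>p. eta p \<in> space (prob_algebra X)"
    and eta_flow: "\<And>p f. f \<in> borel_measurable X \<Longrightarrow> bounded (f ` space X) \<Longrightarrow>
          (\<integral>x. f x \<partial>(eta (Suc p))) =
          (\<integral>x. Qop M g p f x \<partial>(eta p)) / (\<integral>x. Qop M g p (\<lambda>_. 1) x \<partial>(eta p))"
    and phi_prob: "phi \<in> space (prob_algebra X)"
    and sig_pos: "0 < sigm" and sig_lt: "sigm < sigp"
    and MG1: "\<And>p x A. x \<in> space X \<Longrightarrow> A \<in> sets X \<Longrightarrow>
          sigm * measure phi A \<le> measure (M p x) A \<and> measure (M p x) A \<le> sigp * measure phi A"
    and MG2: "bdd_above ((\<lambda>(p, x, y). w p x y) ` (UNIV \<times> space X \<times> space X))"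
    and MG3: "(INF px \<in> UNIV \<times> space X. Qop M g (fst px) (\<lambda>_. 1) (snd px)) > 0"
    and n_pos: "n \<ge> 1"
    and h_meas: "h \<in> borel_measurable X"
    and h_bdd: "bounded (h ` space X)"
  shows "sigma2 X M g R w eta n h
     \<le> (SUP pxy \<in> UNIV \<times> space X \<times> space X. w (fst pxy) (fst (snd pxy)) (snd (snd pxy)))
        * (osc X h)\<^sup>2
        / ((1 - (1 - sigm / sigp))\<^sup>2 * (1 - (1 - sigm / sigp)\<^sup>2)\<^sup>2
           * (INF px \<in> UNIV \<times> space X. Qop M g (fst px) (\<lambda>_. 1) (snd px)))"
proof -
  define W where "W = (SUP pxy \<in> UNIV \<times> space X \<times> space X. w (fst pxy) (fst (snd pxy)) (snd (snd pxy)))"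
  define c where "c = (INF px \<in> UNIV \<times> space X. Qop M g (fst px) (\<lambda>_. 1) (snd px))"
  interpret fk_variance X M g phi sigm sigp c R w eta W
    using M_kernel g_meas g_nonneg Q1_bdd phi_prob sig_pos sig_lt MG1 MG3 R_kernel w_meas w_nonneg
      w_density eta_prob eta_flow INF_Q1_le[OF M_kernel g_nonneg] SUP_w_ge[OF MG2]
    unfolding W_def c_def by unfold_locales auto
  have "bmeas h" unfolding bmeas_def using h_meas h_bdd unfolding bounded_real by blast
  from sigma2_bound[OF this osc_ge[OF h_bdd]] show ?thesis unfolding W_def c_def .
qed

end
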